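(* Let $n,m>3$ be integers and let $\psi$ be an automorphism of $\mathcal{CSR}(m,n)$, and suppose $\psi_1,\dots,\psi_m$ are permutations of $\mathbb{Z}_n$ and $\sigma$ is a permutation of $[m]$ such that $\psi\big(\sum_i x_ie_i\big)=\sum_i\psi_i(x_i)e_{\sigma(i)}$ for every vertex. Then there exist $d_1,\dots,d_m\in\mathbb{Z}_n$ such that the functions $\psi_1+d_1,\dots,\psi_m+d_m$ on $\mathbb{Z}_n$ are all equal.
   Context: For positive integers $m,n$, the cyclic simplicial rook graph $\mathcal{CSR}(m,n)$ is the graph whose vertices are the vectors $(a_1,\dots,a_m)\in\mathbb{Z}_n^m$ with $a_1+\cdots+a_m\equiv 0 \pmod n$, two vertices being adjacent if and only if their vectors differ in exactly two coordinates. $[m]=\{1,\dots,m\}$ and $e_i\in\mathbb{Z}_n^m$ is the vector with $1$ in coordinate $i$ and $0$ elsewhere. For a function $f:\mathbb{Z}_n\to\mathbb{Z}_n$ and $d\in\mathbb{Z}_n$, $f+d$ denotes $x\mapsto f(x)+d$. *)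

theory Defs
  imports Main
begin

definition csr_vertices :: "nat \<Rightarrow> int \<Rightarrow> (nat \<Rightarrow> int) set" where
  "csr_vertices m n = {a. (\<forall>i<m. a i \<in> {0..<n}) \<and> (\<forall>i. m \<le> i \<longrightarrow> a i = 0)
                          \<and> (\<Sum>i<m. a i) mod n = 0}"

definition csr_adj :: "nat \<Rightarrow> (nat \<Rightarrow> int) \<Rightarrow> (nat \<Rightarrow> int) \<Rightarrow> bool" where
  "csr_adj m a b \<longleftrightarrow> card {i. i < m \<and> a i \<noteq> b i} = 2"

definition csr_automorphism :: "nat \<Rightarrow> int \<Rightarrow> ((nat \<Rightarrow> int) \<Rightarrow> (nat \<Rightarrow> int)) \<Rightarrow> bool" where
  "csr_automorphism m n \<psi> \<longleftrightarrow>
     bij_betw \<psi> (csr_vertices m n) (csr_vertices m n) \<and>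
     (\<forall>a\<in>csr_vertices m n. \<forall>b\<in>csr_vertices m n. csr_adj m a b \<longleftrightarrow> csr_adj m (\<psi> a) (\<psi> b))"

end

theory Submission
  imports Defs
begin

(* Since \<psi> maps vertices to vertices and merely permutes coordinates, the sum of the
   \<psi>\<^sub>l(v\<^sub>l) is divisible by n for every vertex v.  The vertices x e\<^sub>i - x e\<^sub>k and
   x e\<^sub>j - x e\<^sub>k (for a third index k) differ only in coordinates i and j, so subtracting
   their sums gives \<psi>\<^sub>i(x) - \<psi>\<^sub>i(0) = \<psi>\<^sub>j(x) - \<psi>\<^sub>j(0) mod n, and d\<^sub>i = -\<psi>\<^sub>i(0) works. *)

definition csr_pair_vertex :: "int \<Rightarrow> nat \<Rightarrow> nat \<Rightarrow> int \<Rightarrow> nat \<Rightarrow> int" where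
  "csr_pair_vertex n i k x = (\<lambda>l. if l = i then x else if l = k then (- x) mod n else 0)"

lemma sum_diff_eq_two_points:
  fixes f g :: "'a \<Rightarrow> 'b::ab_group_add"
  assumes "finite A" "i \<in> A" "j \<in> A" "i \<noteq> j" "\<forall>l\<in>A - {i, j}. f l = g l"
  shows "sum f A - sum g A = f i + f j - g i - g j"
proof -
  have "sum f A - sum g A = (\<Sum>l\<in>A. f l - g l)"
    by (simp add: sum_subtractf)
  also have "\<dots> = (\<Sum>l\<in>{i, j}. f l - g l)"
    using assms by (intro sum.mono_neutral_right) auto
  finally show ?thesis
    using assms(4) by (simp add: algebra_simps)
qed

lemma csr_pair_vertex_mem:
  assumes "i < m" "k < m" "i \<noteq> k" "x \<in> {0..<n}"
  shows "csr_pair_vertex n i k x \<in> csr_vertices m n"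
proof -
  let ?v = "csr_pair_vertex n i k x"
  have "(\<Sum>l<m. ?v l) = (\<Sum>l\<in>{i, k}. ?v l)"
    using assms by (intro sum.mono_neutral_right) (auto simp: csr_pair_vertex_def)
  also have "\<dots> = x + (- x) mod n"
    using assms(3) by (simp add: csr_pair_vertex_def)
  finally have "(\<Sum>l<m. ?v l) mod n = (x + - x) mod n"
    by (simp only: mod_add_right_eq)
  then have "(\<Sum>l<m. ?v l) mod n = 0"
    by simp
  moreover have "\<forall>l<m. ?v l \<in> {0..<n}" "\<forall>l. m \<le> l \<longrightarrow> ?v l = 0"
    using assms by (auto simp: csr_pair_vertex_def)
  ultimately show ?thesis
    unfolding csr_vertices_def by blast
qed

lemma csr_coordinate_sum_dvd:
  assumes "\<psi> ` csr_vertices m n \<subseteq> csr_vertices m n"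
    and "bij_betw \<sigma> {..<m} {..<m}"
    and "\<forall>x\<in>csr_vertices m n. \<forall>i<m. \<psi> x (\<sigma> i) = \<psi>s i (x i)"
    and "v \<in> csr_vertices m n"
  shows "n dvd (\<Sum>i<m. \<psi>s i (v i))"
proof -
  have "(\<Sum>i<m. \<psi>s i (v i)) = (\<Sum>i<m. \<psi> v (\<sigma> i))"
    using assms(3,4) by simp
  also have "\<dots> = (\<Sum>i<m. \<psi> v i)"
    using sum.reindex_bij_betw[OF assms(2)] .
  moreover have "\<psi> v \<in> csr_vertices m n"
    using assms(1,4) by blast
  ultimately show ?thesis
    by (simp add: csr_vertices_def dvd_eq_mod_eq_0)
qed

lemma increments_mod_eq_if_vertex_sums_dvd:
  fixes f :: "nat \<Rightarrow> int \<Rightarrow> int"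
  assumes sums: "\<forall>v\<in>csr_vertices m n. n dvd (\<Sum>l<m. f l (v l))"
    and "3 \<le> m" "i < m" "j < m" "x \<in> {0..<n}"
  shows "(f i x - f i 0) mod n = (f j x - f j 0) mod n"
proof (cases "i = j")
  case False
  have "\<exists>k < 3 :: nat. k \<noteq> i \<and> k \<noteq> j"
    by presburger
  then obtain k where k: "k < m" "k \<noteq> i" "k \<noteq> j"
    using \<open>3 \<le> m\<close> by (meson order_less_le_trans)
  let ?v = "csr_pair_vertex n i k x" and ?w = "csr_pair_vertex n j k x"
  have "?v \<in> csr_vertices m n" "?w \<in> csr_vertices m n"
    using csr_pair_vertex_mem assms k by auto
  then have "n dvd (\<Sum>l<m. f l (?v l)) - (\<Sum>l<m. f l (?w l))"
    using sums by auto
  also have "(\<Sum>l<m. f l (?v l)) - (\<Sum>l<m. f l (?w l)) = f i x + f j 0 - f i 0 - f j x"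
    using assms False k
    by (subst sum_diff_eq_two_points[where i = i and j = j]) (auto simp: csr_pair_vertex_def)
  finally have "n dvd (f i x - f i 0) - (f j x - f j 0)"
    by (simp add: algebra_simps)
  then show ?thesis
    by (simp only: mod_eq_dvd_iff)
qed simp

theorem lemma7:
  fixes m :: nat and n :: int
    and \<psi> :: "(nat \<Rightarrow> int) \<Rightarrow> (nat \<Rightarrow> int)"
    and \<psi>s :: "nat \<Rightarrow> int \<Rightarrow> int"
    and \<sigma> :: "nat \<Rightarrow> nat"
  assumes "m > 3" and "n > 3"
    and "csr_automorphism m n \<psi>"
    and "\<forall>i<m. bij_betw (\<psi>s i) {0..<n} {0..<n}"
    and "bij_betw \<sigma> {..<m} {..<m}"
    and "\<forall>x\<in>csr_vertices m n. \<forall>i<m. \<psi> x (\<sigma> i) = \<psi>s i (x i)"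
  shows "\<exists>d :: nat \<Rightarrow> int. \<forall>i<m. \<forall>j<m. \<forall>x\<in>{0..<n}.
           (\<psi>s i x + d i) mod n = (\<psi>s j x + d j) mod n"
proof (intro exI[of _ "\<lambda>i. - \<psi>s i 0"] allI impI ballI)
  fix i j x assume "i < m" "j < m" "x \<in> {0..<n}"
  have "\<psi> ` csr_vertices m n \<subseteq> csr_vertices m n"
    using assms(3) by (simp add: csr_automorphism_def bij_betw_def)
  then have "\<forall>v\<in>csr_vertices m n. n dvd (\<Sum>l<m. \<psi>s l (v l))"
    using csr_coordinate_sum_dvd assms(5,6) by blast
  from increments_mod_eq_if_vertex_sums_dvd[OF this _ \<open>i < m\<close> \<open>j < m\<close> \<open>x \<in> {0..<n}\<close>]
  show "(\<psi>s i x + - \<psi>s i 0) mod n = (\<psi>s j x + - \<psi>s j 0) mod n"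
    using assms(1) by simp
qed

end
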